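(* Let $\widehat{V}_2(\mathbf{A};\mathbf{Y}) = \frac{\hat\sigma^2}{n}\Big[1+\frac1n\sum_{i=1}^n\sum_{j=1}^n\mathbf{A}_{ij}\Big]$, let $\mathbf{A}^m\in\mathcal{A}(\mathbf{Y})$ maximize $\mathbf{A}\mapsto\widehat{V}_2(\mathbf{A};\mathbf{Y})$ over $\mathcal{A}(\mathbf{Y})$, and let $\widehat{V}_2'(\mathbf{Y})=\frac{\hat\sigma^2}{n}\big[1+\frac1n\sum_{i=1}^n \min\{d_i,n-1\}\big]$. Under the asymptotic scaling assumption and the homoskedasticity assumption $\mathrm{var}(X_i)=\mathrm{var}(X_j)$ for all $i,j\in\mathcal{V}$, for every $\epsilon>0$, \[\lim_{n\to\infty}\Pr\big(n\,\mathrm{var}(\overline{X}) - n\widehat{V}_2(\mathbf{A}^m;\mathbf{Y})>\epsilon\big)=0\quad\text{and}\quad \lim_{n\to\infty}\Pr\big(n\,\mathrm{var}(\overline{X}) - n\widehat{V}_2'(\mathbf{Y})>\epsilon\big)=0.\]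
   Context: Setting: $\mathcal{G}=(\mathcal{V},\mathcal{E})$ is a simple undirected graph with a real random variable $X_i$ attached to each vertex $i$. $\mathcal{G}$ is a dependency graph: for all disjoint $\mathcal{V}_1,\mathcal{V}_2\subset\mathcal{V}$ such that no edge of $\mathcal{E}$ joins a vertex of $\mathcal{V}_1$ to a vertex of $\mathcal{V}_2$, $\{X_i:i\in\mathcal{V}_1\}$ is independent of $\{X_j:j\in\mathcal{V}_2\}$. A subset $\mathcal{V}_S\subseteq\mathcal{V}$ with $|\mathcal{V}_S|=n$ is observed, labeled $1,\dots,n$. $\mathcal{G}_S=(\mathcal{V}_S,\mathcal{E}_S)$ is the induced subgraph on $\mathcal{V}_S$, with $n\times n$ adjacency matrix $\mathbf{A}^\circ$. $\mathcal{G}_R=(\mathcal{V}_S,\mathcal{E}_R)$ is a subgraph with $\mathcal{E}_R\subseteq\mathcal{E}_S$; $d_i$ is the degree of $i\in\mathcal{V}_S$ in $\mathcal{G}$; $\mathbf{Y}=((X_1,\dots,X_n),(d_1,\dots,d_n),\mathcal{G}_R)$. Let $\mu=\frac1n\sum_{i=1}^n \mathrm{E}[X_i]$, $\overline{X}=\frac1n\sum_i X_i$, $\hat\sigma^2=\frac1n\sum_i(X_i-\overline{X})^2$. A binary symmetric $n\times n$ matrix $\mathbf{A}$ with zero diagonal is compatible with $\mathbf{Y}$ if $\mathbf{A}_{ij}=\mathbf{A}_{ji}=1$ for every $\{i,j\}\in\mathcal{E}_R$ and $\sum_j\mathbf{A}_{ij}\le d_i$ for every $i$; $\mathcal{A}(\mathbf{Y})$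 is the set of compatible matrices. Asymptotic scaling assumption: a sequence, indexed by $n\to\infty$, of such settings (nested graphs with $|\mathcal{V}|=N_n\ge n$, $|\mathcal{V}_S|=n$), with finite positive constants $c_1,c_2,c_3$ independent of $n$ such that: $\Pr(|X_i-\mu|>c_1)=0$ for all $i\in\mathcal{V}_S$; $\sum_{j}\mathbf{A}^\circ_{ij}\le c_2$ for all $i\in\mathcal{V}_S$; and $\lim_{n\to\infty} n\,\mathrm{var}(\overline{X})=c_3$. *)

theory Defs
  imports "HOL-Probability.Probability"
begin

(* Observed vertices are labelled 0..n-1 (paper: 1..n) through an injective map lab. *)

definition expec :: "'w measure \<Rightarrow> ('w \<Rightarrow> real) \<Rightarrow> real" where
  "expec M f = integral\<^sup>L M f"

definition var :: "'w measure \<Rightarrow> ('w \<Rightarrow> real) \<Rightarrow> real" where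
  "var M f = integral\<^sup>L M (\<lambda>w. (f w - expec M f)^2)"

definition dependency_graph ::
  "'w measure \<Rightarrow> 'v set \<Rightarrow> ('v \<Rightarrow> 'v \<Rightarrow> bool) \<Rightarrow> ('v \<Rightarrow> 'w \<Rightarrow> real) \<Rightarrow> bool" where
  "dependency_graph M V E X \<longleftrightarrow>
     (\<forall>V1 V2. V1 \<subseteq> V \<longrightarrow> V2 \<subseteq> V \<longrightarrow> V1 \<inter> V2 = {} \<longrightarrow>
        (\<forall>u\<in>V1. \<forall>v\<in>V2. \<not> E u v) \<longrightarrow>
        prob_space.indep_var M
          (PiM V1 (\<lambda>_. borel)) (\<lambda>w. restrict (\<lambda>i. X i w) V1)
          (PiM V2 (\<lambda>_. borel)) (\<lambda>w. restrict (\<lambda>i. X i w) V2))"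

definition mu :: "'w measure \<Rightarrow> nat \<Rightarrow> (nat \<Rightarrow> 'w \<Rightarrow> real) \<Rightarrow> real" where
  "mu M n Y = (1 / real n) * (\<Sum>i<n. expec M (Y i))"

definition Xbar :: "nat \<Rightarrow> (nat \<Rightarrow> 'w \<Rightarrow> real) \<Rightarrow> 'w \<Rightarrow> real" where
  "Xbar n Y w = (1 / real n) * (\<Sum>i<n. Y i w)"

definition sigma_hat2 :: "nat \<Rightarrow> (nat \<Rightarrow> 'w \<Rightarrow> real) \<Rightarrow> 'w \<Rightarrow> real" where
  "sigma_hat2 n Y w = (1 / real n) * (\<Sum>i<n. (Y i w - Xbar n Y w)^2)"

definition V2 :: "nat \<Rightarrow> (nat \<Rightarrow> 'w \<Rightarrow> real) \<Rightarrow> (nat \<Rightarrow> nat \<Rightarrow> real) \<Rightarrow> 'w \<Rightarrow> real" where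
  "V2 n Y A w = sigma_hat2 n Y w / real n * (1 + (1 / real n) * (\<Sum>i<n. \<Sum>j<n. A i j))"

definition V2' :: "nat \<Rightarrow> (nat \<Rightarrow> 'w \<Rightarrow> real) \<Rightarrow> (nat \<Rightarrow> nat) \<Rightarrow> 'w \<Rightarrow> real" where
  "V2' n Y d w = sigma_hat2 n Y w / real n *
      (1 + (1 / real n) * (\<Sum>i<n. real (min (d i) (n - 1))))"

definition compatible :: "nat \<Rightarrow> (nat \<Rightarrow> nat \<Rightarrow> bool) \<Rightarrow> (nat \<Rightarrow> nat) \<Rightarrow> (nat \<Rightarrow> nat \<Rightarrow> real) \<Rightarrow> bool" where
  "compatible n ER d A \<longleftrightarrow>
     (\<forall>i<n. \<forall>j<n. (A i j = 0 \<or> A i j = 1) \<and> A i j = A j i) \<and>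
     (\<forall>i<n. A i i = 0) \<and>
     (\<forall>i<n. \<forall>j<n. ER i j \<longrightarrow> A i j = 1) \<and>
     (\<forall>i<n. (\<Sum>j<n. A i j) \<le> real (d i))"

end

theory Submission
  imports Defs
begin

text \<open>
  Let \<open>A\<^sub>0\<close> be the adjacency matrix of the observed subgraph and \<open>K\<close> the sum of its entries.
  \<open>A\<^sub>0\<close> is compatible with the data, so \<open>V2 A\<^sub>m \<ge> V2 A\<^sub>0\<close>; and \<open>V2' \<ge> V2 A\<^sub>0\<close> because every
  row sum of \<open>A\<^sub>0\<close> is at most \<open>min d\<^sub>i (n - 1)\<close>. It therefore suffices to treat
  \<open>n V2 A\<^sub>0 = sigma_hat2 (1 + K / n)\<close>. In a dependency graph only neighbouring pairs have
  non-zero covariance, so with common variance \<open>s\<close> we get \<open>n var Xbar \<le> s (1 + K / n)\<close>, and an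
  underestimate by more than \<open>\<epsilon>\<close> forces \<open>s - sigma_hat2 > \<epsilon> / (1 + c2)\<close>. Finally
  \<open>sigma_hat2\<close> is the mean of the \<open>(X\<^sub>i - \<mu>)\<^sup>2\<close>, whose expectation is at least \<open>s\<close> and whose
  variance is \<open>O(1 / n)\<close> by the same covariance count, minus \<open>(Xbar - \<mu>)\<^sup>2\<close>, whose expectation
  is \<open>var Xbar = O(1 / n)\<close>; Chebyshev's inequality bounds both deviations.
\<close>

section \<open>Variance of sums under a dependency graph\<close>

definition cov :: "'w measure \<Rightarrow> ('w \<Rightarrow> real) \<Rightarrow> ('w \<Rightarrow> real) \<Rightarrow> real" where
  "cov M f g = integral\<^sup>L M (\<lambda>w. (f w - expec M f) * (g w - expec M g))"

lemma var_nonneg: "0 \<le> var M f"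
  unfolding var_def by (rule integral_nonneg_AE) auto

lemma var_cmult: "var M (\<lambda>w. c * f w) = c\<^sup>2 * var M f"
  unfolding var_def expec_def by (simp add: power_mult_distrib right_diff_distrib[symmetric])

lemma (in finite_measure) integrable_ae_abs_le:
  fixes f :: "'a \<Rightarrow> real"
  assumes "f \<in> borel_measurable M" "AE w in M. \<bar>f w\<bar> \<le> B"
  shows "integrable M f"
  using assms by (intro integrable_const_bound[where B = B]) auto

lemma (in finite_measure) integrable_mult_ae_bounded:
  fixes f g :: "'a \<Rightarrow> real"
  assumes "f \<in> borel_measurable M" "g \<in> borel_measurable M"
    and f_le: "AE w in M. \<bar>f w\<bar> \<le> B" and g_le: "AE w in M. \<bar>g w\<bar> \<le> C"
  shows "integrable M (\<lambda>w. f w * g w)"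
proof (rule integrable_const_bound[where B = "B * C"])
  show "AE w in M. norm (f w * g w) \<le> B * C"
    using f_le g_le by eventually_elim (auto simp: abs_mult intro: mult_mono)
qed (use assms in measurable)

lemma (in prob_space) expec_square_dev_eq:
  assumes "integrable M f" "integrable M (\<lambda>w. (f w)\<^sup>2)"
  shows "expec M (\<lambda>w. (f w - c)\<^sup>2) = var M f + (expec M f - c)\<^sup>2"
  using assms unfolding var_def expec_def
  by (simp add: power2_diff prob_space algebra_simps power2_eq_square)

lemma (in prob_space) var_le_of_ae_abs_le:
  assumes "f \<in> borel_measurable M" and le: "AE w in M. \<bar>f w - c\<bar> \<le> B"
  shows "var M f \<le> B\<^sup>2"
proof -
  have f_le: "AE w in M. \<bar>f w\<bar> \<le> B + \<bar>c\<bar>"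
    using le by eventually_elim auto
  have "integrable M (\<lambda>w. (f w)\<^sup>2)"
    unfolding power2_eq_square by (rule integrable_mult_ae_bounded[OF assms(1,1) f_le f_le])
  moreover have "integrable M f"
    by (rule integrable_ae_abs_le[OF assms(1) f_le])
  ultimately have "var M f \<le> expec M (\<lambda>w. (f w - c)\<^sup>2)"
    by (simp add: expec_square_dev_eq)
  also have "\<dots> \<le> expec M (\<lambda>_. B\<^sup>2)"
    unfolding expec_def
  proof (rule integral_mono_AE)
    show "AE w in M. (f w - c)\<^sup>2 \<le> B\<^sup>2"
      using le by eventually_elim (metis abs_ge_zero power2_abs power_mono)
  qed (use integrable_mult_ae_bounded[OF _ _ le le] assms(1) in \<open>auto simp: power2_eq_square\<close>)
  finally show ?thesis
    by (simp add: expec_def prob_space)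
qed

lemma (in prob_space) Chebyshev_ae_bounded:
  fixes f :: "'a \<Rightarrow> real"
  assumes [measurable]: "f \<in> borel_measurable M"
    and bnd: "AE w in M. \<bar>f w - c\<bar> \<le> B" and "0 < a"
  shows "measure M {w \<in> space M. a \<le> \<bar>f w - expec M f\<bar>} \<le> var M f / a\<^sup>2"
proof -
  have f_le: "AE w in M. \<bar>f w\<bar> \<le> B + \<bar>c\<bar>"
    using bnd by eventually_elim auto
  have "integrable M (\<lambda>w. f w ^ 2)"
    unfolding power2_eq_square by (rule integrable_mult_ae_bounded[OF _ _ f_le f_le]) auto
  then show ?thesis
    using Chebyshev_inequality[of f a] \<open>0 < a\<close> unfolding var_def expec_def by simp
qed

lemma (in prob_space) AE_le_of_prob_gt_eq_0:
  fixes f :: "'a \<Rightarrow> real"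
  assumes [measurable]: "f \<in> borel_measurable M" and "measure M {w \<in> space M. f w > c} = 0"
  shows "AE w in M. f w \<le> c"
proof -
  have "AE w in M. \<not> f w > c"
    using prob_Collect_eq_0[of "\<lambda>w. f w > c"] assms(2) by simp
  then show ?thesis
    by eventually_elim simp
qed

lemma (in prob_space) cov_le_var_avg:
  fixes f g :: "'a \<Rightarrow> real"
  assumes [measurable]: "f \<in> borel_measurable M" "g \<in> borel_measurable M"
    and f_le: "AE w in M. \<bar>f w\<bar> \<le> B" and g_le: "AE w in M. \<bar>g w\<bar> \<le> C"
  shows "cov M f g \<le> (var M f + var M g) / 2"
proof -
  define f0 g0 where "f0 w = f w - expec M f" and "g0 w = g w - expec M g" for w
  have [measurable]: "f0 \<in> borel_measurable M" "g0 \<in> borel_measurable M"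
    unfolding f0_def[abs_def] g0_def[abs_def] by measurable
  have f0_le: "AE w in M. \<bar>f0 w\<bar> \<le> B + \<bar>expec M f\<bar>"
    using f_le by eventually_elim (auto simp: f0_def)
  have g0_le: "AE w in M. \<bar>g0 w\<bar> \<le> C + \<bar>expec M g\<bar>"
    using g_le by eventually_elim (auto simp: g0_def)
  have "cov M f g = integral\<^sup>L M (\<lambda>w. f0 w * g0 w)"
    unfolding cov_def f0_def g0_def ..
  also have "\<dots> \<le> integral\<^sup>L M (\<lambda>w. ((f0 w)\<^sup>2 + (g0 w)\<^sup>2) / 2)"
  proof (rule integral_mono)
    fix w
    show "f0 w * g0 w \<le> ((f0 w)\<^sup>2 + (g0 w)\<^sup>2) / 2"
      using sum_squares_ge_zero[of "f0 w - g0 w" 0] by (simp add: power2_eq_square algebra_simps)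
  qed (use integrable_mult_ae_bounded[OF _ _ f0_le g0_le] integrable_mult_ae_bounded[OF _ _ f0_le f0_le]
        integrable_mult_ae_bounded[OF _ _ g0_le g0_le] in \<open>auto simp: power2_eq_square\<close>)
  also have "\<dots> = (var M f + var M g) / 2"
    using integrable_mult_ae_bounded[OF _ _ f0_le f0_le] integrable_mult_ae_bounded[OF _ _ g0_le g0_le]
    unfolding var_def f0_def g0_def by (simp add: power2_eq_square)
  finally show ?thesis .
qed

lemma (in prob_space) cov_indep_eq_0:
  assumes "indep_var borel f borel g" "integrable M f" "integrable M g"
  shows "cov M f g = 0"
proof -
  have "indep_var borel ((\<lambda>x. x - expec M f) \<circ> f) borel ((\<lambda>x. x - expec M g) \<circ> g)"
    by (rule indep_var_compose[OF assms(1)]) auto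
  then show ?thesis
    using assms(2,3) unfolding cov_def comp_def
    by (simp add: indep_var_lebesgue_integral expec_def prob_space)
qed

lemma (in prob_space) var_sum_eq_sum_cov:
  fixes W :: "'i \<Rightarrow> 'a \<Rightarrow> real"
  assumes "finite I"
    and meas: "\<And>i. i \<in> I \<Longrightarrow> W i \<in> borel_measurable M"
    and bnd: "\<And>i. i \<in> I \<Longrightarrow> AE w in M. \<bar>W i w\<bar> \<le> B"
  shows "var M (\<lambda>w. \<Sum>i\<in>I. W i w) = (\<Sum>i\<in>I. \<Sum>j\<in>I. cov M (W i) (W j))"
proof -
  define D where "D i w = W i w - expec M (W i)" for i w
  have int: "integrable M (W i)" if "i \<in> I" for i
    by (rule integrable_ae_abs_le[OF meas[OF that] bnd[OF that]])
  have D_le: "AE w in M. \<bar>D i w\<bar> \<le> B + \<bar>expec M (W i)\<bar>" if "i \<in> I" for i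
    using bnd[OF that] by eventually_elim (auto simp: D_def)
  have int_DD: "integrable M (\<lambda>w. D i w * D j w)" if "i \<in> I" "j \<in> I" for i j
    by (rule integrable_mult_ae_bounded[OF _ _ D_le[OF that(1)] D_le[OF that(2)]])
      (use meas that in \<open>auto simp: D_def\<close>)
  have "expec M (\<lambda>w. \<Sum>i\<in>I. W i w) = (\<Sum>i\<in>I. expec M (W i))"
    unfolding expec_def using int by simp
  moreover have "((\<Sum>i\<in>I. W i w) - (\<Sum>i\<in>I. expec M (W i)))\<^sup>2 = (\<Sum>i\<in>I. \<Sum>j\<in>I. D i w * D j w)" for w
    unfolding D_def sum_subtractf[symmetric] power2_eq_square sum_product ..
  ultimately have "var M (\<lambda>w. \<Sum>i\<in>I. W i w) = integral\<^sup>L M (\<lambda>w. \<Sum>i\<in>I. \<Sum>j\<in>I. D i w * D j w)"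
    unfolding var_def by presburger
  also have "\<dots> = (\<Sum>i\<in>I. \<Sum>j\<in>I. integral\<^sup>L M (\<lambda>w. D i w * D j w))"
    using int_DD by (simp add: Bochner_Integration.integral_sum)
  finally show ?thesis
    unfolding cov_def D_def .
qed

lemma (in prob_space) var_sum_le_dependency_degrees:
  fixes W :: "'i \<Rightarrow> 'a \<Rightarrow> real" and G :: "'i \<Rightarrow> 'i \<Rightarrow> bool"
  assumes "finite I"
    and meas: "\<And>i. i \<in> I \<Longrightarrow> W i \<in> borel_measurable M"
    and bnd: "\<And>i. i \<in> I \<Longrightarrow> AE w in M. \<bar>W i w\<bar> \<le> B"
    and indep: "\<And>i j. i \<in> I \<Longrightarrow> j \<in> I \<Longrightarrow> i \<noteq> j \<Longrightarrow> \<not> G i j \<Longrightarrow>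
      indep_var borel (W i) borel (W j)"
    and var_le: "\<And>i. i \<in> I \<Longrightarrow> var M (W i) \<le> s" and "0 \<le> s"
  shows "var M (\<lambda>w. \<Sum>i\<in>I. W i w) \<le> s * (real (card I) + (\<Sum>i\<in>I. real (card {j\<in>I. G i j})))"
proof -
  have cov_le: "cov M (W i) (W j) \<le> (if j = i then s else 0) + s * of_bool (G i j)"
    if "i \<in> I" "j \<in> I" for i j
  proof (cases "j = i \<or> G i j")
    case True
    have "cov M (W i) (W j) \<le> (var M (W i) + var M (W j)) / 2"
      using that by (intro cov_le_var_avg[OF meas meas bnd bnd])
    also have "\<dots> \<le> s"
      using var_le[OF that(1)] var_le[OF that(2)] by simp
    finally have "cov M (W i) (W j) \<le> s" .
    with True \<open>0 \<le> s\<close> show ?thesis by auto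
  next
    case False
    have "integrable M (W k)" if "k \<in> I" for k
      by (rule integrable_ae_abs_le[OF meas[OF that] bnd[OF that]])
    then have "cov M (W i) (W j) = 0"
      using False that by (intro cov_indep_eq_0 indep) auto
    with False show ?thesis by simp
  qed
  have "var M (\<lambda>w. \<Sum>i\<in>I. W i w) = (\<Sum>i\<in>I. \<Sum>j\<in>I. cov M (W i) (W j))"
    by (rule var_sum_eq_sum_cov[OF \<open>finite I\<close> meas bnd])
  also have "\<dots> \<le> (\<Sum>i\<in>I. \<Sum>j\<in>I. (if j = i then s else 0) + s * of_bool (G i j))"
    by (intro sum_mono cov_le)
  also have "\<dots> = s * (real (card I) + (\<Sum>i\<in>I. real (card {j\<in>I. G i j})))"
    using \<open>finite I\<close> by (simp add: sum.distrib sum_distrib_left[symmetric] Int_def algebra_simps)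
  finally show ?thesis .
qed

section \<open>Sample mean and sample variance\<close>

definition degree_sum :: "nat \<Rightarrow> (nat \<Rightarrow> nat \<Rightarrow> bool) \<Rightarrow> real" where
  "degree_sum n G = (\<Sum>i<n. real (card {j. j < n \<and> G i j}))"

lemma degree_sum_nonneg: "0 \<le> degree_sum n G"
  unfolding degree_sum_def by (simp add: sum_nonneg)

lemma degree_sum_le:
  assumes "\<And>i. i < n \<Longrightarrow> real (card {j. j < n \<and> G i j}) \<le> c"
  shows "degree_sum n G \<le> real n * c"
  using sum_mono[of "{..<n}" "\<lambda>i. real (card {j. j < n \<and> G i j})" "\<lambda>_. c"] assms
  unfolding degree_sum_def by simp

lemma Xbar_measurable:
  assumes "\<And>i. i < n \<Longrightarrow> Y i \<in> borel_measurable M"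
  shows "Xbar n Y \<in> borel_measurable M"
  unfolding Xbar_def[abs_def] using assms by (intro borel_measurable_times borel_measurable_sum) auto

lemma sigma_hat2_measurable:
  assumes "\<And>i. i < n \<Longrightarrow> Y i \<in> borel_measurable M"
  shows "sigma_hat2 n Y \<in> borel_measurable M"
  unfolding sigma_hat2_def[abs_def] using assms Xbar_measurable[OF assms]
  by (intro borel_measurable_times borel_measurable_sum) auto

lemma sigma_hat2_nonneg: "0 \<le> sigma_hat2 n Y w"
  unfolding sigma_hat2_def by (simp add: sum_nonneg)

lemma (in prob_space) expec_Xbar:
  assumes "\<And>i. i < n \<Longrightarrow> integrable M (Y i)"
  shows "expec M (Xbar n Y) = mu M n Y"
  unfolding expec_def Xbar_def[abs_def] mu_def using assms by simp

lemma Xbar_diff_abs_le: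
  assumes "0 < n" "\<And>i. i < n \<Longrightarrow> \<bar>Y i w - c\<bar> \<le> B"
  shows "\<bar>Xbar n Y w - c\<bar> \<le> B"
proof -
  have Xbar_diff: "Xbar n Y w - c = (\<Sum>i<n. Y i w - c) / real n"
    using assms(1) unfolding Xbar_def by (simp add: sum_subtractf field_simps)
  have "\<bar>\<Sum>i<n. Y i w - c\<bar> \<le> (\<Sum>i<n. \<bar>Y i w - c\<bar>)"
    by (rule sum_abs)
  also have "\<dots> \<le> real n * B"
    using sum_mono[of "{..<n}" "\<lambda>i. \<bar>Y i w - c\<bar>" "\<lambda>_. B"] assms(2) by simp
  finally show ?thesis
    unfolding Xbar_diff using assms(1) by (simp add: divide_le_eq mult.commute)
qed

lemma AE_Xbar_diff_abs_le:
  assumes "0 < n" "\<And>i. i < n \<Longrightarrow> AE w in M. \<bar>Y i w - c\<bar> \<le> B"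
  shows "AE w in M. \<bar>Xbar n Y w - c\<bar> \<le> B"
proof -
  have "AE w in M. \<forall>i\<in>{..<n}. \<bar>Y i w - c\<bar> \<le> B"
    using assms(2) by (subst AE_finite_all) auto
  then show ?thesis
    by eventually_elim (use assms(1) in \<open>auto intro: Xbar_diff_abs_le\<close>)
qed

lemma sigma_hat2_eq_shifted:
  assumes "0 < n"
  shows "sigma_hat2 n Y w = (1 / real n) * (\<Sum>i<n. (Y i w - c)\<^sup>2) - (Xbar n Y w - c)\<^sup>2"
proof -
  define b where "b = Xbar n Y w - c"
  have sum_dev: "(\<Sum>i<n. Y i w - c) = real n * b"
    using assms unfolding b_def Xbar_def by (simp add: sum_subtractf field_simps)
  have "(\<Sum>i<n. (Y i w - Xbar n Y w)\<^sup>2) = (\<Sum>i<n. ((Y i w - c) - b)\<^sup>2)"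
    unfolding b_def by (simp add: algebra_simps)
  also have "\<dots> = (\<Sum>i<n. (Y i w - c)\<^sup>2) - 2 * b * (\<Sum>i<n. Y i w - c) + real n * b\<^sup>2"
    unfolding power2_diff sum_subtractf sum.distrib sum_distrib_right[symmetric] sum_distrib_left[symmetric]
    by simp
  also have "\<dots> = (\<Sum>i<n. (Y i w - c)\<^sup>2) - real n * b\<^sup>2"
    unfolding sum_dev by (simp add: power2_eq_square)
  finally show ?thesis
    using assms unfolding sigma_hat2_def b_def by (simp add: field_simps)
qed

lemma (in prob_space) n_var_Xbar_le:
  fixes Y :: "nat \<Rightarrow> 'a \<Rightarrow> real" and G :: "nat \<Rightarrow> nat \<Rightarrow> bool"
  assumes n: "0 < n"
    and meas: "\<And>i. i < n \<Longrightarrow> Y i \<in> borel_measurable M"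
    and bnd: "\<And>i. i < n \<Longrightarrow> AE w in M. \<bar>Y i w\<bar> \<le> B"
    and indep: "\<And>i j. i < n \<Longrightarrow> j < n \<Longrightarrow> i \<noteq> j \<Longrightarrow> \<not> G i j \<Longrightarrow>
      indep_var borel (Y i) borel (Y j)"
    and var_le: "\<And>i. i < n \<Longrightarrow> var M (Y i) \<le> s" and "0 \<le> s"
  shows "real n * var M (Xbar n Y) \<le> s * (1 + degree_sum n G / real n)"
proof -
  have "var M (\<lambda>w. \<Sum>i<n. Y i w) \<le> s * (real n + degree_sum n G)"
    using var_sum_le_dependency_degrees[of "{..<n}" Y B G s] assms
    unfolding degree_sum_def by simp
  moreover have "real n * var M (Xbar n Y) = var M (\<lambda>w. \<Sum>i<n. Y i w) / real n"
    using var_cmult[of M "1 / real n"] n unfolding Xbar_def[abs_def] by (simp add: power2_eq_square)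
  ultimately show ?thesis
    using n by (simp add: divide_right_mono field_simps)
qed

lemma (in prob_space) var_Xbar_le_of_degree_le:
  fixes Y :: "nat \<Rightarrow> 'a \<Rightarrow> real" and G :: "nat \<Rightarrow> nat \<Rightarrow> bool"
  assumes n: "0 < n"
    and meas: "\<And>i. i < n \<Longrightarrow> Y i \<in> borel_measurable M"
    and bnd: "\<And>i. i < n \<Longrightarrow> AE w in M. \<bar>Y i w\<bar> \<le> B"
    and indep: "\<And>i j. i < n \<Longrightarrow> j < n \<Longrightarrow> i \<noteq> j \<Longrightarrow> \<not> G i j \<Longrightarrow>
      indep_var borel (Y i) borel (Y j)"
    and var_le: "\<And>i. i < n \<Longrightarrow> var M (Y i) \<le> s" and "0 \<le> s"
    and deg: "\<And>i. i < n \<Longrightarrow> real (card {j. j < n \<and> G i j}) \<le> c"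
  shows "var M (Xbar n Y) \<le> s * (1 + c) / real n"
proof -
  have "degree_sum n G \<le> real n * c"
    by (rule degree_sum_le) (use deg in auto)
  then have "s * (1 + degree_sum n G / real n) \<le> s * (1 + c)"
    using n \<open>0 \<le> s\<close> by (intro mult_left_mono) (auto simp: divide_le_eq mult.commute)
  moreover have "real n * var M (Xbar n Y) \<le> s * (1 + degree_sum n G / real n)"
    by (rule n_var_Xbar_le) (use assms in auto)
  ultimately show ?thesis
    using n by (simp add: pos_le_divide_eq mult.commute)
qed

lemma (in prob_space) mu_sq_dev_ge:
  fixes Y :: "nat \<Rightarrow> 'a \<Rightarrow> real"
  assumes "0 < n"
    and meas: "\<And>i. i < n \<Longrightarrow> Y i \<in> borel_measurable M"
    and bnd: "\<And>i. i < n \<Longrightarrow> AE w in M. \<bar>Y i w\<bar> \<le> B"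
    and var_ge: "\<And>i. i < n \<Longrightarrow> s \<le> var M (Y i)"
  shows "s \<le> mu M n (\<lambda>i w. (Y i w - c)\<^sup>2)"
proof -
  have "s \<le> expec M (\<lambda>w. (Y i w - c)\<^sup>2)" if "i < n" for i
  proof -
    have "integrable M (Y i)"
      by (rule integrable_ae_abs_le[OF meas[OF that] bnd[OF that]])
    moreover have "integrable M (\<lambda>w. (Y i w)\<^sup>2)"
      unfolding power2_eq_square using meas[OF that] by (intro integrable_mult_ae_bounded[OF _ _ bnd[OF that] bnd[OF that]])
    ultimately show ?thesis
      using var_ge[OF that] by (simp add: expec_square_dev_eq add_increasing2)
  qed
  then have "real n * s \<le> (\<Sum>i<n. expec M (\<lambda>w. (Y i w - c)\<^sup>2))"
    using sum_mono[of "{..<n}" "\<lambda>_. s"] by fastforce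
  then show ?thesis
    using \<open>0 < n\<close> unfolding mu_def by (simp add: field_simps)
qed

lemma (in finite_measure) measure_deficit_le:
  fixes f g h :: "'a \<Rightarrow> real"
  assumes [measurable]: "f \<in> borel_measurable M" "g \<in> borel_measurable M"
    and h_eq: "\<And>w. h w = f w - (g w)\<^sup>2" and "s \<le> m"
  shows "measure M {w \<in> space M. s - h w > \<delta>}
    \<le> measure M {w \<in> space M. \<delta> / 2 \<le> \<bar>f w - m\<bar>} + measure M {w \<in> space M. sqrt (\<delta> / 2) \<le> \<bar>g w\<bar>}"
proof -
  have "{w \<in> space M. s - h w > \<delta>} \<subseteq>
      {w \<in> space M. \<delta> / 2 \<le> \<bar>f w - m\<bar>} \<union> {w \<in> space M. sqrt (\<delta> / 2) \<le> \<bar>g w\<bar>}"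
  proof clarify
    fix w assume "s - h w > \<delta>" and "\<not> sqrt (\<delta> / 2) \<le> \<bar>g w\<bar>"
    then have "(g w)\<^sup>2 < \<delta> / 2"
      by (metis not_le real_sqrt_abs real_sqrt_less_iff)
    then show "\<delta> / 2 \<le> \<bar>f w - m\<bar>"
      using \<open>s - h w > \<delta>\<close> \<open>s \<le> m\<close> unfolding h_eq by linarith
  qed
  then show ?thesis
    by (intro order_trans[OF finite_measure_mono measure_Un_le]) auto
qed

lemma (in prob_space) prob_Xbar_sq_dev_deviation_ge_le:
  fixes Y :: "nat \<Rightarrow> 'a \<Rightarrow> real" and G :: "nat \<Rightarrow> nat \<Rightarrow> bool" and c :: real
  defines "Z \<equiv> \<lambda>i w. (Y i w - c)\<^sup>2"
  assumes n: "0 < n"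
    and meas: "\<And>i. i < n \<Longrightarrow> Y i \<in> borel_measurable M"
    and bnd: "\<And>i. i < n \<Longrightarrow> AE w in M. \<bar>Y i w - c\<bar> \<le> c1"
    and indep: "\<And>i j. i < n \<Longrightarrow> j < n \<Longrightarrow> i \<noteq> j \<Longrightarrow> \<not> G i j \<Longrightarrow>
      indep_var borel (Y i) borel (Y j)"
    and deg: "\<And>i. i < n \<Longrightarrow> real (card {j. j < n \<and> G i j}) \<le> c2"
    and "0 < a"
  shows "measure M {w \<in> space M. a \<le> \<bar>Xbar n Z w - expec M (Xbar n Z)\<bar>}
    \<le> (1 + c2) * c1 ^ 4 / real n / a\<^sup>2"
proof -
  have meas_Z: "Z i \<in> borel_measurable M" if "i < n" for i
    using meas[OF that] unfolding Z_def by measurable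
  have Z_le: "AE w in M. \<bar>Z i w - 0\<bar> \<le> c1\<^sup>2" if "i < n" for i
    using bnd[OF that] by eventually_elim (simp add: Z_def, metis abs_ge_zero power2_abs power_mono)
  have "measure M {w \<in> space M. a \<le> \<bar>Xbar n Z w - expec M (Xbar n Z)\<bar>} \<le> var M (Xbar n Z) / a\<^sup>2"
    by (rule Chebyshev_ae_bounded[OF Xbar_measurable AE_Xbar_diff_abs_le[where c = 0]])
      (use n meas_Z Z_le \<open>0 < a\<close> in auto)
  also have "var M (Xbar n Z) \<le> (c1\<^sup>2)\<^sup>2 * (1 + c2) / real n"
  proof (rule var_Xbar_le_of_degree_le[OF n meas_Z _ _ _ _ deg])
    show "AE w in M. \<bar>Z i w\<bar> \<le> c1\<^sup>2" if "i < n" for i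
      using Z_le[OF that] by simp
    show "var M (Z i) \<le> (c1\<^sup>2)\<^sup>2" if "i < n" for i
      by (rule var_le_of_ae_abs_le[OF meas_Z Z_le, OF that that])
    show "indep_var borel (Z i) borel (Z j)" if "i < n" "j < n" "i \<noteq> j" "\<not> G i j" for i j
      using indep_var_compose[OF indep[OF that], of "\<lambda>x. (x - c)\<^sup>2" borel "\<lambda>x. (x - c)\<^sup>2" borel]
      unfolding Z_def comp_def by simp
  qed simp_all
  finally show ?thesis
    by (simp add: divide_right_mono mult_ac)
qed

lemma (in prob_space) prob_sigma_hat2_deficit_le:
  fixes Y :: "nat \<Rightarrow> 'a \<Rightarrow> real" and G :: "nat \<Rightarrow> nat \<Rightarrow> bool" and n :: nat
  defines "\<mu> \<equiv> mu M n Y"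
  assumes n: "0 < n"
    and meas: "\<And>i. i < n \<Longrightarrow> Y i \<in> borel_measurable M"
    and bnd: "\<And>i. i < n \<Longrightarrow> AE w in M. \<bar>Y i w - \<mu>\<bar> \<le> c1"
    and indep: "\<And>i j. i < n \<Longrightarrow> j < n \<Longrightarrow> i \<noteq> j \<Longrightarrow> \<not> G i j \<Longrightarrow>
      indep_var borel (Y i) borel (Y j)"
    and var_ge: "\<And>i. i < n \<Longrightarrow> s \<le> var M (Y i)"
    and deg: "\<And>i. i < n \<Longrightarrow> real (card {j. j < n \<and> G i j}) \<le> c2"
    and "0 < \<delta>"
  shows "measure M {w \<in> space M. s - sigma_hat2 n Y w > \<delta>}
    \<le> 2 / \<delta> * var M (Xbar n Y) + 4 / \<delta>\<^sup>2 * ((1 + c2) * c1 ^ 4 / real n)"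
proof -
  define Z where "Z = (\<lambda>i w. (Y i w - \<mu>)\<^sup>2)"
  have Y_le: "AE w in M. \<bar>Y i w\<bar> \<le> c1 + \<bar>\<mu>\<bar>" if "i < n" for i
    using bnd[OF that] by eventually_elim auto
  have Xbar_Y_le: "AE w in M. \<bar>Xbar n Y w - \<mu>\<bar> \<le> c1"
    by (rule AE_Xbar_diff_abs_le) (use n bnd in auto)
  have [measurable]: "Xbar n Y \<in> borel_measurable M" "Xbar n Z \<in> borel_measurable M"
    using meas unfolding Z_def by (auto intro!: Xbar_measurable)
  have "integrable M (Z i)" if "i < n" for i
    unfolding Z_def power2_eq_square
    by (rule integrable_mult_ae_bounded[OF _ _ bnd[OF that] bnd[OF that]]) (use meas[OF that] in auto)
  then have "expec M (Xbar n Z) = mu M n Z"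
    by (rule expec_Xbar)
  then have s_le: "s \<le> expec M (Xbar n Z)"
    using mu_sq_dev_ge[OF n meas Y_le var_ge, where c = \<mu>] unfolding Z_def by simp
  have "measure M {w \<in> space M. \<delta> / 2 \<le> \<bar>Xbar n Z w - expec M (Xbar n Z)\<bar>}
      \<le> (1 + c2) * c1 ^ 4 / real n / (\<delta> / 2)\<^sup>2"
    unfolding Z_def by (rule prob_Xbar_sq_dev_deviation_ge_le[where G = G]) (use n meas bnd indep deg \<open>0 < \<delta>\<close> in auto)
  then have prob_Z: "measure M {w \<in> space M. \<delta> / 2 \<le> \<bar>Xbar n Z w - expec M (Xbar n Z)\<bar>}
      \<le> 4 / \<delta>\<^sup>2 * ((1 + c2) * c1 ^ 4 / real n)"
    by (simp add: power_divide mult_ac)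
  have "expec M (Xbar n Y) = \<mu>"
    unfolding \<mu>_def using meas Y_le by (intro expec_Xbar integrable_ae_abs_le)
  then have prob_Y: "measure M {w \<in> space M. sqrt (\<delta> / 2) \<le> \<bar>Xbar n Y w - \<mu>\<bar>}
      \<le> 2 / \<delta> * var M (Xbar n Y)"
    using Chebyshev_ae_bounded[OF _ Xbar_Y_le, where a = "sqrt (\<delta> / 2)"] \<open>0 < \<delta>\<close>
    by (simp add: mult.commute)
  have "sigma_hat2 n Y w = Xbar n Z w - (Xbar n Y w - \<mu>)\<^sup>2" for w
    using sigma_hat2_eq_shifted[OF n, of Y w \<mu>] unfolding Xbar_def Z_def by simp
  then have "measure M {w \<in> space M. s - sigma_hat2 n Y w > \<delta>}
      \<le> measure M {w \<in> space M. \<delta> / 2 \<le> \<bar>Xbar n Z w - expec M (Xbar n Z)\<bar>}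
        + measure M {w \<in> space M. sqrt (\<delta> / 2) \<le> \<bar>Xbar n Y w - \<mu>\<bar>}"
    using s_le by (intro measure_deficit_le) measurable
  with prob_Y prob_Z show ?thesis
    by linarith
qed

section \<open>Observed subgraph of a network\<close>

lemma dependency_graph_indep_var:
  assumes "prob_space M" "dependency_graph M V E X"
    and "u \<in> V" "v \<in> V" "u \<noteq> v" "\<not> E u v"
  shows "prob_space.indep_var M borel (X u) borel (X v)"
proof -
  have "prob_space.indep_var M
      (PiM {u} (\<lambda>_. borel)) (\<lambda>w. restrict (\<lambda>i. X i w) {u})
      (PiM {v} (\<lambda>_. borel)) (\<lambda>w. restrict (\<lambda>i. X i w) {v})"
    using assms(2-) unfolding dependency_graph_def by auto
  then have "prob_space.indep_var M borel ((\<lambda>f. f u) \<circ> (\<lambda>w. restrict (\<lambda>i. X i w) {u}))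
      borel ((\<lambda>f. f v) \<circ> (\<lambda>w. restrict (\<lambda>i. X i w) {v}))"
    by (rule prob_space.indep_var_compose[OF assms(1)]) auto
  then show ?thesis
    by (simp add: comp_def)
qed

lemma card_observed_neighbours_le_degree:
  assumes "finite V" "inj_on lab {..<n}" "\<And>i. i < n \<Longrightarrow> lab i \<in> V"
  shows "card {j. j < n \<and> E (lab i) (lab j)} \<le> card {v \<in> V. E (lab i) v}"
proof -
  have "card {j. j < n \<and> E (lab i) (lab j)} = card (lab ` {j. j < n \<and> E (lab i) (lab j)})"
    by (rule card_image[symmetric], rule inj_on_subset[OF assms(2)]) auto
  also have "\<dots> \<le> card {v \<in> V. E (lab i) v}"
    using assms(1,3) by (intro card_mono) auto
  finally show ?thesis .
qed

lemma card_neighbours_le_pred: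
  assumes "\<not> G i i" "i < n"
  shows "card {j. j < n \<and> G i j} \<le> n - 1"
proof -
  have "card {j. j < n \<and> G i j} \<le> card ({..<n} - {i})"
    using assms(1) by (intro card_mono) auto
  with assms(2) show ?thesis
    by simp
qed

lemma compatible_observed_adjacency:
  assumes "finite V" "inj_on lab {..<n}" "\<And>i. i < n \<Longrightarrow> lab i \<in> V"
    and "\<And>u v. E u v \<Longrightarrow> E v u" "\<And>u. \<not> E u u"
    and "\<And>i j. ER i j \<Longrightarrow> i < n \<and> j < n \<and> E (lab i) (lab j)"
  shows "compatible n ER (\<lambda>i. card {v \<in> V. E (lab i) v}) (\<lambda>i j. of_bool (E (lab i) (lab j)))"
  unfolding compatible_def
proof (intro conjI allI impI)
  fix i assume "i < n"
  have "(\<Sum>j<n. of_bool (E (lab i) (lab j)) :: real) = real (card {j. j < n \<and> E (lab i) (lab j)})"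
    by (simp add: Int_def)
  then show "(\<Sum>j<n. of_bool (E (lab i) (lab j))) \<le> real (card {v \<in> V. E (lab i) v})"
    using card_observed_neighbours_le_degree[OF assms(1-3)] by simp
qed (use assms(4-) in auto)

lemma V2_adjacency_eq:
  assumes "0 < n"
  shows "real n * V2 n Y (\<lambda>i j. of_bool (G i j)) w = sigma_hat2 n Y w * (1 + degree_sum n G / real n)"
  using assms unfolding V2_def degree_sum_def by (simp add: Int_def field_simps)

lemma V2_adjacency_le_V2':
  assumes "\<And>i. \<not> G i i" "\<And>i. i < n \<Longrightarrow> card {j. j < n \<and> G i j} \<le> d i"
  shows "V2 n Y (\<lambda>i j. of_bool (G i j)) w \<le> V2' n Y d w"
proof -
  have "(\<Sum>i<n. \<Sum>j<n. of_bool (G i j)) \<le> (\<Sum>i<n. real (min (d i) (n - 1)))"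
    using assms card_neighbours_le_pred by (intro sum_mono) (auto simp: Int_def)
  then show ?thesis
    unfolding V2_def V2'_def using sigma_hat2_nonneg[of n Y w]
    by (intro mult_left_mono add_left_mono) (auto simp: divide_right_mono)
qed

lemma less_divide_of_less_mult:
  fixes x k C e :: real
  assumes "1 \<le> k" "k \<le> C" "0 < e" "e < x * k"
  shows "e / C < x"
proof -
  have "0 < x"
    using assms zero_less_mult_pos2[of x k] by linarith
  then have "e < x * C"
    using assms mult_left_mono[of k C x] by linarith
  with assms show ?thesis
    by (simp add: divide_less_eq mult.commute)
qed

text \<open>The bound of \<open>prob_sigma_hat2_deficit_le\<close> at \<open>\<delta> = \<epsilon> / (1 + c2)\<close>.\<close>

definition underestimation_bound :: "real \<Rightarrow> real \<Rightarrow> real \<Rightarrow> nat \<Rightarrow> real \<Rightarrow> real" where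
  "underestimation_bound \<epsilon> c1 c2 n v =
    2 * (1 + c2) / \<epsilon> * v + 4 * (1 + c2)\<^sup>2 / \<epsilon>\<^sup>2 * ((1 + c2) * c1 ^ 4 / real n)"

lemma (in prob_space) prob_underestimate_le:
  fixes X :: "'v \<Rightarrow> 'a \<Rightarrow> real" and E :: "'v \<Rightarrow> 'v \<Rightarrow> bool"
    and lab :: "nat \<Rightarrow> 'v" and T :: "'a \<Rightarrow> real"
  defines "Xo \<equiv> \<lambda>i. X (lab i)" and "G \<equiv> \<lambda>i j. E (lab i) (lab j)"
  assumes n: "0 < n"
    and dep: "dependency_graph M V E X"
    and rv: "\<And>v. v \<in> V \<Longrightarrow> X v \<in> borel_measurable M"
    and lab_inj: "inj_on lab {..<n}" and lab_V: "\<And>i. i < n \<Longrightarrow> lab i \<in> V"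
    and bounded: "\<And>i. i < n \<Longrightarrow> measure M {w \<in> space M. \<bar>Xo i w - mu M n Xo\<bar> > c1} = 0"
    and deg: "\<And>i. i < n \<Longrightarrow> real (card {j. j < n \<and> G i j}) \<le> c2" and "0 \<le> c2"
    and homosk: "\<And>u v. u \<in> V \<Longrightarrow> v \<in> V \<Longrightarrow> var M (X u) = var M (X v)"
    and "0 < \<epsilon>"
    and T_ge: "\<And>w. w \<in> space M \<Longrightarrow> real n * V2 n Xo (\<lambda>i j. of_bool (G i j)) w \<le> T w"
  shows "measure M {w \<in> space M. real n * var M (Xbar n Xo) - T w > \<epsilon>}
    \<le> underestimation_bound \<epsilon> c1 c2 n (var M (Xbar n Xo))"
proof -
  define s where "s = var M (Xo 0)"
  define \<delta> where "\<delta> = \<epsilon> / (1 + c2)"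
  have meas: "Xo i \<in> borel_measurable M" if "i < n" for i
    unfolding Xo_def using rv lab_V that by auto
  have bnd: "AE w in M. \<bar>Xo i w - mu M n Xo\<bar> \<le> c1" if "i < n" for i
    using meas[OF that] bounded[OF that] by (intro AE_le_of_prob_gt_eq_0) auto
  have indep: "indep_var borel (Xo i) borel (Xo j)" if "i < n" "j < n" "i \<noteq> j" "\<not> G i j" for i j
    unfolding Xo_def using that lab_V inj_onD[OF lab_inj] G_def
    by (intro dependency_graph_indep_var[OF prob_space_axioms dep]) auto
  have var_eq: "var M (Xo i) = s" if "i < n" for i
    unfolding s_def Xo_def using homosk lab_V that n by blast
  define k where "k = 1 + degree_sum n G / real n"
  have var_Xbar_le: "real n * var M (Xbar n Xo) \<le> s * k"
    unfolding k_def
  proof (rule n_var_Xbar_le[OF n meas _ indep])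
    show "AE w in M. \<bar>Xo i w\<bar> \<le> c1 + \<bar>mu M n Xo\<bar>" if "i < n" for i
      using bnd[OF that] by eventually_elim auto
  qed (use var_eq n var_nonneg in auto)
  have k_bounds: "1 \<le> k" "k \<le> 1 + c2"
    using degree_sum_le[of n G c2] deg n degree_sum_nonneg[of n G]
    unfolding k_def by (simp_all add: divide_le_eq mult.commute)
  have "{w \<in> space M. real n * var M (Xbar n Xo) - T w > \<epsilon>}
      \<subseteq> {w \<in> space M. s - sigma_hat2 n Xo w > \<delta>}"
  proof clarify
    fix w assume w: "w \<in> space M" "\<epsilon> < real n * var M (Xbar n Xo) - T w"
    have "\<epsilon> < (s - sigma_hat2 n Xo w) * k"
      using var_Xbar_le T_ge[OF w(1)] w(2) unfolding V2_adjacency_eq[OF n] k_def left_diff_distrib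
      by linarith
    then show "\<delta> < s - sigma_hat2 n Xo w"
      unfolding \<delta>_def using k_bounds \<open>0 < \<epsilon>\<close> by (intro less_divide_of_less_mult)
  qed
  then have "measure M {w \<in> space M. real n * var M (Xbar n Xo) - T w > \<epsilon>}
      \<le> measure M {w \<in> space M. s - sigma_hat2 n Xo w > \<delta>}"
    using sigma_hat2_measurable[OF meas] by (intro finite_measure_mono) measurable
  also have "\<dots> \<le> 2 / \<delta> * var M (Xbar n Xo) + 4 / \<delta>\<^sup>2 * ((1 + c2) * c1 ^ 4 / real n)"
    using \<open>0 < \<epsilon>\<close> \<open>0 \<le> c2\<close> var_eq unfolding \<delta>_def
    by (intro prob_sigma_hat2_deficit_le[OF n meas bnd indep _ deg]) auto
  finally show ?thesis
    unfolding \<delta>_def underestimation_bound_def by (simp add: power_divide)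
qed

lemma underestimation_bound_tendsto_0:
  assumes "(\<lambda>n. real n * v n) \<longlonglongrightarrow> c"
  shows "(\<lambda>n. underestimation_bound \<epsilon> c1 c2 n (v n)) \<longlonglongrightarrow> 0"
proof -
  have "(\<lambda>n. real n * v n * (1 / real n)) \<longlonglongrightarrow> c * 0"
    by (intro tendsto_mult assms lim_1_over_n)
  moreover have "\<forall>\<^sub>F n in sequentially. real n * v n * (1 / real n) = v n"
    using eventually_gt_at_top[of 0] by eventually_elim simp
  ultimately have "v \<longlonglongrightarrow> 0"
    using Lim_transform_eventually by fastforce
  then have "(\<lambda>n. 2 * (1 + c2) / \<epsilon> * v n + 4 * (1 + c2)\<^sup>2 / \<epsilon>\<^sup>2 * ((1 + c2) * c1 ^ 4 * (1 / real n)))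
      \<longlonglongrightarrow> 2 * (1 + c2) / \<epsilon> * 0 + 4 * (1 + c2)\<^sup>2 / \<epsilon>\<^sup>2 * ((1 + c2) * c1 ^ 4 * 0)"
    by (intro tendsto_intros lim_1_over_n)
  then show ?thesis
    unfolding underestimation_bound_def by simp
qed

theorem corollary2:
  fixes M :: "nat \<Rightarrow> 'w measure"
    and V :: "nat \<Rightarrow> 'v set"
    and E :: "nat \<Rightarrow> 'v \<Rightarrow> 'v \<Rightarrow> bool"
    and X :: "nat \<Rightarrow> 'v \<Rightarrow> 'w \<Rightarrow> real"
    and lab :: "nat \<Rightarrow> nat \<Rightarrow> 'v"
    and ER :: "nat \<Rightarrow> nat \<Rightarrow> nat \<Rightarrow> bool"
    and Am :: "nat \<Rightarrow> 'w \<Rightarrow> nat \<Rightarrow> nat \<Rightarrow> real"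
    and c1 c2 c3 \<epsilon> :: real
  defines "Xo \<equiv> (\<lambda>n i. X n (lab n i))"
    and "d \<equiv> (\<lambda>n i. card {v \<in> V n. E n (lab n i) v})"
  assumes prob: "\<And>n. prob_space (M n)"
    and finV: "\<And>n. finite (V n)"
    and E_in: "\<And>n u v. E n u v \<Longrightarrow> u \<in> V n \<and> v \<in> V n"
    and E_sym: "\<And>n u v. E n u v \<Longrightarrow> E n v u"
    and E_irrefl: "\<And>n u. \<not> E n u u"
    and rv: "\<And>n v. v \<in> V n \<Longrightarrow> X n v \<in> borel_measurable (M n)"
    and dep: "\<And>n. dependency_graph (M n) (V n) (E n) (X n)"
    and lab_inj: "\<And>n. inj_on (lab n) {..<n}"
    and lab_V: "\<And>n i. i < n \<Longrightarrow> lab n i \<in> V n"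
    and ER_sub: "\<And>n i j. ER n i j \<Longrightarrow> i < n \<and> j < n \<and> E n (lab n i) (lab n j)"
    and ER_sym: "\<And>n i j. ER n i j \<Longrightarrow> ER n j i"
    and c_pos: "c1 > 0" "c2 > 0" "c3 > 0"
    and bounded: "\<And>n i. i < n \<Longrightarrow>
        measure (M n) {w \<in> space (M n). \<bar>Xo n i w - mu (M n) n (Xo n)\<bar> > c1} = 0"
    and deg_bound: "\<And>n i. i < n \<Longrightarrow> real (card {j. j < n \<and> E n (lab n i) (lab n j)}) \<le> c2"
    and var_lim: "(\<lambda>n. real n * var (M n) (Xbar n (Xo n))) \<longlonglongrightarrow> c3"
    and homosk: "\<And>n u v. u \<in> V n \<Longrightarrow> v \<in> V n \<Longrightarrow> var (M n) (X n u) = var (M n) (X n v)"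
    and Am_compat: "\<And>n w. w \<in> space (M n) \<Longrightarrow> compatible n (ER n) (d n) (Am n w)"
    and Am_max: "\<And>n w A. w \<in> space (M n) \<Longrightarrow> compatible n (ER n) (d n) A \<Longrightarrow>
        V2 n (Xo n) A w \<le> V2 n (Xo n) (Am n w) w"
    and eps: "\<epsilon> > 0"
  shows "((\<lambda>n. measure (M n) {w \<in> space (M n).
            real n * var (M n) (Xbar n (Xo n)) - real n * V2 n (Xo n) (Am n w) w > \<epsilon>})
           \<longlonglongrightarrow> 0) \<and>
         ((\<lambda>n. measure (M n) {w \<in> space (M n).
            real n * var (M n) (Xbar n (Xo n)) - real n * V2' n (Xo n) (d n) w > \<epsilon>})
           \<longlonglongrightarrow> 0)"
proof -
  define G where "G n = (\<lambda>i j. E n (lab n i) (lab n j))" for n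
  have underestimate_tendsto_0: "(\<lambda>n. measure (M n)
      {w \<in> space (M n). real n * var (M n) (Xbar n (Xo n)) - T n w > \<epsilon>}) \<longlonglongrightarrow> 0"
    if T_ge: "\<And>n w. w \<in> space (M n) \<Longrightarrow> real n * V2 n (Xo n) (\<lambda>i j. of_bool (G n i j)) w \<le> T n w"
    for T
  proof (rule Lim_null_comparison[OF _ underestimation_bound_tendsto_0[OF var_lim]])
    show "\<forall>\<^sub>F n in sequentially. norm (measure (M n)
        {w \<in> space (M n). real n * var (M n) (Xbar n (Xo n)) - T n w > \<epsilon>})
        \<le> underestimation_bound \<epsilon> c1 c2 n (var (M n) (Xbar n (Xo n)))"
      using eventually_gt_at_top[of 0]
      unfolding Xo_def real_norm_def abs_of_nonneg[OF measure_nonneg]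
      by (rule eventually_mono, intro prob_space.prob_underestimate_le[OF prob _ dep rv lab_inj lab_V
          bounded[unfolded Xo_def] deg_bound _ homosk eps T_ge[unfolded Xo_def G_def]])
        (use c_pos in auto)
  qed
  have compat: "compatible n (ER n) (d n) (\<lambda>i j. of_bool (G n i j))" for n
    unfolding d_def G_def using finV lab_inj lab_V E_sym E_irrefl ER_sub
    by (intro compatible_observed_adjacency)
  show ?thesis
  proof (intro conjI underestimate_tendsto_0 mult_left_mono)
    fix n w assume "w \<in> space (M n)"
    then show "V2 n (Xo n) (\<lambda>i j. of_bool (G n i j)) w \<le> V2 n (Xo n) (Am n w) w"
      using Am_max compat by blast
    show "V2 n (Xo n) (\<lambda>i j. of_bool (G n i j)) w \<le> V2' n (Xo n) (d n) w"
      unfolding d_def G_def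
      by (rule V2_adjacency_le_V2') (use E_irrefl card_observed_neighbours_le_degree[OF finV lab_inj lab_V] in auto)
  qed simp_all
qed

end
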